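(* For $t\in T( *,\circ,x)$ define inductively a partial operator $\mathcal{C}(t)\in\mathcal{G}(\mathtt{ALD})$ by $\mathcal{C}(x)=\mathrm{id}$, $\mathcal{C}(t_1*t_2)=\mathcal{C}(t_1)\bullet\mathrm{sh}_1(\mathcal{C}(t_2))\bullet S^{+}_{\varepsilon}\bullet\mathrm{sh}_1(\mathcal{C}(t_1))^{-1}$, and $\mathcal{C}(t_1\circ t_2)=\mathcal{C}(t_1)\bullet\mathrm{sh}_1(\mathcal{C}(t_2))\bullet A^{+}_{\varepsilon}$. Then for every $t\in T( *,\circ,x)$ there exists $p$ such that, for every sufficiently large $n$, the operator $\mathcal{C}(t)$ maps $x^{[n]}$ to $t*x^{[n-p]}$.
   Context: $T( *,\circ,x)$: terms in the single variable $x$ with binary symbols $*,\circ$. Right vines: $x^{[1]}=x$, $x^{[n]}=x*x^{[n-1]}$. Addresses are finite sequences over $\{0,1\}$, $\varepsilon$ the empty one; $t/\alpha$ is the subterm at $\alpha$ ($0$ left, $1$ right). Partial operators act on the right ($t\cdot f$), $f\bullet g$ = "$f$ then $g$", and $f^{-1}$ is the inverse partial map. $S^{+}_{\alpha}$ is defined on $t$ iff $t/\alpha=t_1*(t_2\,\square\,t_3)$ with $\square\in\{*,\circ\}$, and replaces this subterm by $(t_1*t_2)\,\square\,(t_1*t_3)$; $A^{+}_{\alpha}$ is defined iff $t/\alpha=t_1*(t_2*t_3)$ and replaces it by $(t_1\circ t_2)*t_3$; $S^-_\alpha,A^-_\alpha$ are the inverse partial maps. $\mathcal{G}(\mathtt{ALD})$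 is the monoid of partial maps generated by all $S^{\pm}_\alpha,A^{\pm}_\alpha$. For a partial map $f$ and address $\beta$, $\mathrm{sh}_\beta(f)$ is the partial map applying $f$ to the $\beta$-th subterm (defined iff $t/\beta$ exists and is in the domain of $f$). *)

theory Defs
  imports Main
begin

datatype trm = X | Star trm trm | Circ trm trm

text \<open>Right vines: vine 1 = x, vine (n+1) = x * vine n (vine 0 is an irrelevant filler).\<close>
fun vine :: "nat \<Rightarrow> trm" where
  "vine 0 = X"
| "vine (Suc 0) = X"
| "vine (Suc (Suc n)) = Star X (vine (Suc n))"

text \<open>Partial operators are represented by their graphs (functional relations);
  (t, t') \<in> f means f is defined on t with value t'.  Then f \<bullet> g ("f then g")
  is relational composition f O g, the identity is Id and the inverse partial map
  is the converse relation.\<close>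
type_synonym op = "(trm \<times> trm) set"

text \<open>Addresses: lists over {0,1}, encoded as bool list (False = 0 = left, True = 1 = right).\<close>
type_synonym addr = "bool list"

fun sh :: "addr \<Rightarrow> op \<Rightarrow> op" where
  "sh [] f = f"
| "sh (False # a) f =
     {(Star u v, Star u' v) | u u' v. (u, u') \<in> sh a f} \<union>
     {(Circ u v, Circ u' v) | u u' v. (u, u') \<in> sh a f}"
| "sh (True # a) f =
     {(Star v u, Star v u') | u u' v. (u, u') \<in> sh a f} \<union>
     {(Circ v u, Circ v u') | u u' v. (u, u') \<in> sh a f}"

definition S_root :: op where
  "S_root = {(Star t1 (Star t2 t3), Star (Star t1 t2) (Star t1 t3)) | t1 t2 t3. True}
          \<union> {(Star t1 (Circ t2 t3), Circ (Star t1 t2) (Star t1 t3)) | t1 t2 t3. True}"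

definition A_root :: op where
  "A_root = {(Star t1 (Star t2 t3), Star (Circ t1 t2) t3) | t1 t2 t3. True}"

definition S_plus :: "addr \<Rightarrow> op" where "S_plus a = sh a S_root"
definition A_plus :: "addr \<Rightarrow> op" where "A_plus a = sh a A_root"

fun C :: "trm \<Rightarrow> op" where
  "C X = Id"
| "C (Star t1 t2) = C t1 O sh [True] (C t2) O S_plus [] O (sh [True] (C t1))\<inverse>"
| "C (Circ t1 t2) = C t1 O sh [True] (C t2) O A_plus []"

end

theory Submission
  imports Defs
begin

text \<open>By induction on t, C(t) maps x^[n] to t * x^[n - p(t)], where p(x) = 1,
  p(t1 * t2) = p(t2) and p(t1 o t2) = p(t1) + p(t2).  For t1 * t2, first C(t1) and then
  sh_1(C(t2)) produce t1 * (t2 * x^[m]); S^+ distributes t1, and the inverse of sh_1(C(t1))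
  folds t1 * x^[m] back into x^[m + p(t1)].  For t1 o t2 the last step is A^+ instead.
  Since p(t) is at most the number of leaves of t, which is size t + 1, every
  n > size t + 1 works.\<close>

fun vine_shift :: "trm \<Rightarrow> nat" where
  "vine_shift X = 1"
| "vine_shift (Star t1 t2) = vine_shift t2"
| "vine_shift (Circ t1 t2) = vine_shift t1 + vine_shift t2"

lemma vine_shift_le_size: "vine_shift t \<le> size t + 1"
  by (induction t) auto

lemma vine_Suc: "0 < n \<Longrightarrow> vine (Suc n) = Star X (vine n)"
  by (cases n) auto

lemma sh_right_StarI: "(u, u') \<in> f \<Longrightarrow> (Star v u, Star v u') \<in> sh [True] f"
  by auto

lemma S_plus_root_StarI: "(Star t1 (Star t2 t3), Star (Star t1 t2) (Star t1 t3)) \<in> S_plus []"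
  by (auto simp: S_plus_def S_root_def)

lemma A_plus_rootI: "(Star t1 (Star t2 t3), Star (Circ t1 t2) t3) \<in> A_plus []"
  by (auto simp: A_plus_def A_root_def)

lemma C_vine:
  assumes "size t + 1 < n"
  shows "(vine n, Star t (vine (n - vine_shift t))) \<in> C t"
  using assms
proof (induction t arbitrary: n)
  case X
  then show ?case
    using vine_Suc[of "n - 1"] by simp
next
  case (Star t1 t2)
  let ?p1 = "vine_shift t1" and ?p2 = "vine_shift t2"
  define m where "m = n - ?p1 - ?p2"
  have bounds: "size t1 + 1 < n" "size t2 + 1 < n - ?p1" "size t1 + 1 < n - ?p2"
    using Star.prems vine_shift_le_size[of t1] vine_shift_le_size[of t2] by auto
  have "(vine n, Star t1 (vine (n - ?p1))) \<in> C t1"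
    using Star.IH(1) bounds(1) .
  moreover have "(Star t1 (vine (n - ?p1)), Star t1 (Star t2 (vine m))) \<in> sh [True] (C t2)"
    unfolding m_def by (rule sh_right_StarI, rule Star.IH(2), rule bounds(2))
  moreover have "(Star t1 (Star t2 (vine m)), Star (Star t1 t2) (Star t1 (vine m))) \<in> S_plus []"
    by (rule S_plus_root_StarI)
  moreover have "(vine (n - ?p2), Star t1 (vine m)) \<in> C t1"
    using Star.IH(1)[OF bounds(3)] by (simp add: m_def add.commute)
  then have "(Star (Star t1 t2) (Star t1 (vine m)), Star (Star t1 t2) (vine (n - ?p2)))
      \<in> (sh [True] (C t1))\<inverse>"
    by (auto intro: sh_right_StarI)
  ultimately show ?case
    unfolding C.simps vine_shift.simps by (meson relcompI)
next
  case (Circ t1 t2)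
  let ?p1 = "vine_shift t1" and ?p2 = "vine_shift t2"
  have bounds: "size t1 + 1 < n" "size t2 + 1 < n - ?p1"
    using Circ.prems vine_shift_le_size[of t1] by auto
  have "(vine n, Star t1 (vine (n - ?p1))) \<in> C t1"
    using Circ.IH(1) bounds(1) .
  moreover have "(Star t1 (vine (n - ?p1)), Star t1 (Star t2 (vine (n - ?p1 - ?p2))))
      \<in> sh [True] (C t2)"
    by (rule sh_right_StarI, rule Circ.IH(2), rule bounds(2))
  moreover have "(Star t1 (Star t2 (vine (n - ?p1 - ?p2))), Star (Circ t1 t2) (vine (n - ?p1 - ?p2)))
      \<in> A_plus []"
    by (rule A_plus_rootI)
  ultimately show ?case
    unfolding C.simps vine_shift.simps diff_diff_add[symmetric] by (meson relcompI)
qed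

theorem lemma3p4:
  shows "\<forall>t. \<exists>p::nat. \<exists>N::nat. \<forall>n\<ge>N. (vine n, Star t (vine (n - p))) \<in> C t"
proof
  fix t
  have "\<forall>n \<ge> size t + 2. (vine n, Star t (vine (n - vine_shift t))) \<in> C t"
    using C_vine by auto
  then show "\<exists>p N. \<forall>n\<ge>N. (vine n, Star t (vine (n - p))) \<in> C t"
    by blast
qed

end
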